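(* Let $d\ge 1$ and let $f:\mathbb{R}^d\setminus\{0\}\to\mathbb{R}$ be differentiable and scale-invariant, i.e. $f(c\mathbf{w})=f(\mathbf{w})$ for all $\mathbf{w}\neq 0$ and all $c>0$. Fix a learning rate $\eta>0$, a momentum coefficient $\beta\in[0,1)$, and an initial point $\mathbf{w}_0\neq 0$. Define the momentum gradient descent iterates by $\mathbf{p}_{-1}=0$ and, for $t\ge 0$, $$\mathbf{p}_t=\beta\,\mathbf{p}_{t-1}+\nabla f(\mathbf{w}_t),\qquad \mathbf{w}_{t+1}=\mathbf{w}_t-\eta\,\mathbf{p}_t$$ (assuming all iterates $\mathbf{w}_t$ are nonzero so that the gradients are defined). Then for every $t\ge 0$, $$\|\mathbf{w}_{t+1}\|_2^2=\|\mathbf{w}_t\|_2^2+\eta^2\|\mathbf{p}_t\|_2^2+2\eta^2\sum_{k=0}^{t-1}\beta^{t-k}\|\mathbf{p}_k\|_2^2 .$$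
   Context: Scale invariance of $f$ means $f(c\mathbf{w})=f(\mathbf{w})$ for every $c>0$; for such differentiable $f$ one has $\mathbf{w}\cdot\nabla f(\mathbf{w})=0$. The update rule above is the (heavy-ball) momentum gradient descent with no weight decay; the empty sum (for $t=0$) is zero. *)

theory Defs
  imports "HOL-Analysis.Analysis"
begin

end

theory Submission
  imports Defs
begin

text \<open>Differentiating \<open>c \<mapsto> f (c *\<^sub>R w)\<close> at \<open>c = 1\<close> shows that the gradient is
  orthogonal to the current iterate. Hence in \<open>w t \<bullet> p t\<close> only the accumulated momentum
  survives, and unrolling the recursion gives
  \<open>w t \<bullet> p t = - \<eta> * (\<Sum>k<t. \<beta> ^ (t - k) * norm (p k) ^ 2)\<close>; expanding
  \<open>norm (w t - \<eta> *\<^sub>R p t) ^ 2\<close> yields the identity.\<close>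

lemma scale_invariant_derivative_radial:
  fixes f :: "'a::real_normed_vector \<Rightarrow> real"
  assumes deriv: "(f has_derivative D) (at x)"
    and scale_inv: "\<And>c. c > 0 \<Longrightarrow> f (c *\<^sub>R x) = f x"
  shows "D x = 0"
proof -
  have ray: "((\<lambda>c::real. c *\<^sub>R x) has_derivative (\<lambda>h. h *\<^sub>R x)) (at 1)"
    by (auto intro!: derivative_eq_intros)
  have "((\<lambda>c. f (c *\<^sub>R x)) has_derivative (\<lambda>h. D (h *\<^sub>R x))) (at 1)"
    using has_derivative_compose[OF ray] deriv by (simp add: o_def)
  moreover have "((\<lambda>c. f (c *\<^sub>R x)) has_derivative (\<lambda>h. 0)) (at 1)"
    by (rule has_derivative_transform_within_open[of "\<lambda>c. f x" _ _ _ "{0<..}"])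
       (auto simp: scale_inv)
  ultimately have "(\<lambda>h::real. D (h *\<^sub>R x)) = (\<lambda>h. 0)"
    by (rule has_derivative_unique)
  then show ?thesis
    by (metis scale_one)
qed

lemma momentum_inner_iterate:
  fixes w p g :: "nat \<Rightarrow> 'a::real_inner" and \<eta> \<beta> :: real
  assumes orth: "\<And>t. g t \<bullet> w t = 0"
    and p0: "p 0 = g 0"
    and pSuc: "\<And>t. p (Suc t) = \<beta> *\<^sub>R p t + g (Suc t)"
    and wSuc: "\<And>t. w (Suc t) = w t - \<eta> *\<^sub>R p t"
  shows "w t \<bullet> p t = - \<eta> * (\<Sum>k<t. \<beta> ^ (t - k) * norm (p k) ^ 2)"
proof (induction t)
  case 0
  then show ?case
    using orth[of 0] by (simp add: p0 inner_commute)
next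
  case (Suc t)
  have "w (Suc t) \<bullet> p (Suc t) = \<beta> * (w (Suc t) \<bullet> p t)"
    using orth[of "Suc t"] by (simp add: pSuc inner_add_right inner_commute)
  also have "\<dots> = \<beta> * (w t \<bullet> p t - \<eta> * norm (p t) ^ 2)"
    by (simp add: wSuc inner_diff_left power2_norm_eq_inner)
  also have "\<dots> = - \<eta> * (\<beta> * (\<Sum>k<t. \<beta> ^ (t - k) * norm (p k) ^ 2) + \<beta> * norm (p t) ^ 2)"
    using Suc.IH by (simp add: algebra_simps)
  also have "\<beta> * (\<Sum>k<t. \<beta> ^ (t - k) * norm (p k) ^ 2) = (\<Sum>k<t. \<beta> ^ (Suc t - k) * norm (p k) ^ 2)"
    by (simp add: sum_distrib_left Suc_diff_le mult.assoc)
  finally show ?case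
    by simp
qed

lemma power2_norm_diff_scaleR:
  fixes x v :: "'a::real_inner"
  shows "norm (x - a *\<^sub>R v) ^ 2 = norm x ^ 2 - 2 * a * (x \<bullet> v) + a\<^sup>2 * norm v ^ 2"
  unfolding power2_norm_eq_inner
  by (simp add: inner_diff_left inner_diff_right inner_commute algebra_simps power2_eq_square)

theorem mainTheorem1:
  fixes f :: "'a::euclidean_space \<Rightarrow> real"
    and grad :: "'a \<Rightarrow> 'a"
    and w p :: "nat \<Rightarrow> 'a"
    and \<eta> \<beta> :: real
  assumes grad: "\<And>x. x \<noteq> 0 \<Longrightarrow> (f has_derivative (\<lambda>h. grad x \<bullet> h)) (at x)"
    and scale_inv: "\<And>x c. x \<noteq> 0 \<Longrightarrow> c > 0 \<Longrightarrow> f (c *\<^sub>R x) = f x"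
    and eta: "\<eta> > 0"
    and beta: "0 \<le> \<beta>" "\<beta> < 1"
    and nonzero: "\<And>t. w t \<noteq> 0"
    and p0: "p 0 = grad (w 0)"
    and pSuc: "\<And>t. p (Suc t) = \<beta> *\<^sub>R p t + grad (w (Suc t))"
    and wSuc: "\<And>t. w (Suc t) = w t - \<eta> *\<^sub>R p t"
  shows "norm (w (Suc t)) ^ 2 = norm (w t) ^ 2 + \<eta>\<^sup>2 * norm (p t) ^ 2
           + 2 * \<eta>\<^sup>2 * (\<Sum>k<t. \<beta> ^ (t - k) * norm (p k) ^ 2)"
proof -
  have orth: "grad (w s) \<bullet> w s = 0" for s
    using scale_invariant_derivative_radial[OF grad scale_inv] nonzero by blast
  have "norm (w (Suc t)) ^ 2 = norm (w t) ^ 2 - 2 * \<eta> * (w t \<bullet> p t) + \<eta>\<^sup>2 * norm (p t) ^ 2"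
    by (simp only: wSuc power2_norm_diff_scaleR)
  also have "w t \<bullet> p t = - \<eta> * (\<Sum>k<t. \<beta> ^ (t - k) * norm (p k) ^ 2)"
    using momentum_inner_iterate[OF orth p0 pSuc wSuc] .
  finally show ?thesis
    by (simp add: algebra_simps power2_eq_square)
qed

end
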